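(* Let $(\mathfrak{g}_\sigma,\mathfrak{q})$ be a reductive $CR$-algebra with invariant complement $\mathfrak{q}^c$. Then $\mathfrak{N}(\mathfrak{q},\mathfrak{q}^c)=\{Z\in\mathfrak{q}\mid[Z,\mathfrak{q}^c]\subseteq\mathfrak{q}^c\}$ is a Lie subalgebra of $\mathfrak{q}$ containing $\mathfrak{q}\cap\sigma(\mathfrak{q})$, and for every $Z\in\mathfrak{N}(\mathfrak{q},\mathfrak{q}^c)\setminus\sigma(\mathfrak{q})$ the Levi-order of $\sigma(Z)$ is either $1$ or $+\infty$.
   Context: $\mathfrak{g}$ is a finite-dimensional complex Lie algebra, $\sigma$ an anti-$\mathbb{C}$-linear involution, $\mathfrak{g}_\sigma$ its fixed points; $(\mathfrak{g}_\sigma,\mathfrak{q})$ with $\mathfrak{q}$ a complex subalgebra of $\mathfrak{g}$ is a $CR$-algebra. It is reductive if there is a $\mathbb{C}$-linear complement $\mathfrak{q}^c$ of $\mathfrak{q}$ in $\mathfrak{g}$ (an invariant complement) with $[\mathfrak{q}\cap\sigma(\mathfrak{q}),\mathfrak{q}^c]\subseteq\mathfrak{q}^c$ and $\mathfrak{g}=(\mathfrak{q}\cap\sigma(\mathfrak{q}))\oplus(\mathfrak{q}\cap\sigma(\mathfrak{q}^c))\oplus(\mathfrak{q}^c\cap\sigma(\mathfrak{q}))\oplus(\mathfrak{q}^c\cap\sigma(\mathfrak{q}^c))$. Higher order commutators: $[X_1,\dots,X_h]=[[X_1,\dots,X_{h-1}],X_h]$. For $W\in\sigma(\mathfrak{q})\setminus\mathfrak{q}$,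 its Levi-order is the least $k$ such that there exist $Z_1,\dots,Z_k\in\mathfrak{q}$ with $[W,Z_1,\dots,Z_k]\notin\mathfrak{q}+\sigma(\mathfrak{q})$, and $+\infty$ if no such $k$ exists. *)

theory Defs
  imports Complex_Main "HOL-Library.Extended_Nat"
begin

text \<open>The complex vector space structure on the carrier type 'a is given explicitly by
a scalar multiplication sc (complex scalars), since Main has no complex-vector class.\<close>

definition fin_dim_complex_space :: "(complex \<Rightarrow> 'a::ab_group_add \<Rightarrow> 'a) \<Rightarrow> bool" where
  "fin_dim_complex_space sc \<longleftrightarrow>
     vector_space sc \<and> (\<exists>B::'a set. finite B \<and> module.span sc B = UNIV)"

definition lie_algebra ::
  "(complex \<Rightarrow> 'a::ab_group_add \<Rightarrow> 'a) \<Rightarrow> ('a \<Rightarrow> 'a \<Rightarrow> 'a) \<Rightarrow> bool" where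
  "lie_algebra sc br \<longleftrightarrow>
     (\<forall>x y z. br (x + y) z = br x z + br y z) \<and>
     (\<forall>x y z. br x (y + z) = br x y + br x z) \<and>
     (\<forall>c x y. br (sc c x) y = sc c (br x y)) \<and>
     (\<forall>c x y. br x (sc c y) = sc c (br x y)) \<and>
     (\<forall>x. br x x = 0) \<and>
     (\<forall>x y z. br x (br y z) + br y (br z x) + br z (br x y) = 0)"

text \<open>Anti-C-linear involution of the Lie algebra (an involutive anti-linear Lie algebra
automorphism; its fixed points form the real form g_sigma).\<close>
definition anti_involution ::
  "(complex \<Rightarrow> 'a::ab_group_add \<Rightarrow> 'a) \<Rightarrow> ('a \<Rightarrow> 'a \<Rightarrow> 'a) \<Rightarrow> ('a \<Rightarrow> 'a) \<Rightarrow> bool" where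
  "anti_involution sc br \<sigma> \<longleftrightarrow>
     (\<forall>x y. \<sigma> (x + y) = \<sigma> x + \<sigma> y) \<and>
     (\<forall>c x. \<sigma> (sc c x) = sc (cnj c) (\<sigma> x)) \<and>
     (\<forall>x. \<sigma> (\<sigma> x) = x) \<and>
     (\<forall>x y. \<sigma> (br x y) = br (\<sigma> x) (\<sigma> y))"

definition lie_subalgebra ::
  "(complex \<Rightarrow> 'a::ab_group_add \<Rightarrow> 'a) \<Rightarrow> ('a \<Rightarrow> 'a \<Rightarrow> 'a) \<Rightarrow> 'a set \<Rightarrow> bool" where
  "lie_subalgebra sc br S \<longleftrightarrow> module.subspace sc S \<and> (\<forall>x\<in>S. \<forall>y\<in>S. br x y \<in> S)"

definition sum_set :: "('a::ab_group_add) set \<Rightarrow> 'a set \<Rightarrow> 'a set" where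
  "sum_set A B = {a + b | a b. a \<in> A \<and> b \<in> B}"

definition direct_sum4 :: "('a::ab_group_add) set \<Rightarrow> 'a set \<Rightarrow> 'a set \<Rightarrow> 'a set \<Rightarrow> bool" where
  "direct_sum4 A B C D \<longleftrightarrow>
     (\<forall>x. \<exists>!(a, b, c, d). a \<in> A \<and> b \<in> B \<and> c \<in> C \<and> d \<in> D \<and> x = a + b + c + d)"

definition invariant_complement ::
  "(complex \<Rightarrow> 'a::ab_group_add \<Rightarrow> 'a) \<Rightarrow> ('a \<Rightarrow> 'a \<Rightarrow> 'a) \<Rightarrow> ('a \<Rightarrow> 'a) \<Rightarrow>
     'a set \<Rightarrow> 'a set \<Rightarrow> bool" where
  "invariant_complement sc br \<sigma> q qc \<longleftrightarrow>
     module.subspace sc qc \<and> q \<inter> qc = {0} \<and> sum_set q qc = UNIV \<and>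
     (\<forall>x\<in>q \<inter> \<sigma> ` q. \<forall>y\<in>qc. br x y \<in> qc) \<and>
     direct_sum4 (q \<inter> \<sigma> ` q) (q \<inter> \<sigma> ` qc) (qc \<inter> \<sigma> ` q) (qc \<inter> \<sigma> ` qc)"

text \<open>Higher order commutator: iter_br br W Z k = [W, Z 0, ..., Z (k-1)],
with [X_1,...,X_h] = [[X_1,...,X_(h-1)],X_h].\<close>
fun iter_br :: "('a \<Rightarrow> 'a \<Rightarrow> 'a) \<Rightarrow> 'a \<Rightarrow> (nat \<Rightarrow> 'a) \<Rightarrow> nat \<Rightarrow> 'a" where
  "iter_br br W Z 0 = W"
| "iter_br br W Z (Suc k) = br (iter_br br W Z k) (Z k)"

definition levi_witness ::
  "('a::ab_group_add \<Rightarrow> 'a \<Rightarrow> 'a) \<Rightarrow> ('a \<Rightarrow> 'a) \<Rightarrow> 'a set \<Rightarrow> 'a \<Rightarrow> nat \<Rightarrow> bool" where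
  "levi_witness br \<sigma> q W k \<longleftrightarrow>
     (\<exists>Z. (\<forall>i<k. Z i \<in> q) \<and> iter_br br W Z k \<notin> sum_set q (\<sigma> ` q))"

text \<open>Levi-order of W (for W in sigma(q) minus q): least k admitting a witness, else infinity.\<close>
definition levi_order ::
  "('a::ab_group_add \<Rightarrow> 'a \<Rightarrow> 'a) \<Rightarrow> ('a \<Rightarrow> 'a) \<Rightarrow> 'a set \<Rightarrow> 'a \<Rightarrow> enat" where
  "levi_order br \<sigma> q W =
     (if \<exists>k. levi_witness br \<sigma> q W k
      then enat (LEAST k. levi_witness br \<sigma> q W k) else \<infinity>)"

definition normalizer_compl :: "('a \<Rightarrow> 'a \<Rightarrow> 'a) \<Rightarrow> 'a set \<Rightarrow> 'a set \<Rightarrow> 'a set" where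
  "normalizer_compl br q qc = {Z \<in> q. \<forall>Y\<in>qc. br Z Y \<in> qc}"

end

theory Submission
  imports Defs
begin

text \<open>Let \<open>N = \<NN>(q, q\<^sup>c)\<close> and \<open>W = \<sigma> Z\<close> with \<open>Z \<in> N\<close>. Since \<open>W \<in> \<sigma>(q)\<close>, its Levi-order is at least 1.
If it is not 1, then \<open>[W, q] \<subseteq> q + \<sigma>(q)\<close>; as \<open>\<sigma>(N)\<close> preserves \<open>\<sigma>(q\<^sup>c)\<close>, this forces \<open>[W, b]\<close> into
\<open>q \<inter> \<sigma>(q\<^sup>c)\<close> for every \<open>b \<in> q \<inter> \<sigma>(q\<^sup>c)\<close>. The elements \<open>Y \<in> \<sigma>(N)\<close> with this property form a set \<open>M\<close>
that is stable under brackets with \<open>q \<inter> \<sigma>(q)\<close>, and \<open>q = (q \<inter> \<sigma>(q)) + (q \<inter> \<sigma>(q\<^sup>c))\<close>. Hence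
\<open>M + q \<subseteq> q + \<sigma>(q)\<close> is stable under brackets with \<open>q\<close>, so no iterated commutator
\<open>[W, Z\<^sub>1, \<dots>, Z\<^sub>k]\<close> leaves \<open>q + \<sigma>(q)\<close> and the Levi-order is infinite.\<close>

lemma levi_witness_0_iff: "levi_witness br \<sigma> q W 0 \<longleftrightarrow> W \<notin> sum_set q (\<sigma> ` q)"
  unfolding levi_witness_def by simp

lemma levi_witness_1_iff:
  "levi_witness br \<sigma> q W 1 \<longleftrightarrow> (\<exists>z\<in>q. br W z \<notin> sum_set q (\<sigma> ` q))"
  unfolding levi_witness_def
proof
  assume "\<exists>Z. (\<forall>i<1. Z i \<in> q) \<and> iter_br br W Z 1 \<notin> sum_set q (\<sigma> ` q)"
  then show "\<exists>z\<in>q. br W z \<notin> sum_set q (\<sigma> ` q)" by auto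
next
  assume "\<exists>z\<in>q. br W z \<notin> sum_set q (\<sigma> ` q)"
  then obtain z where "z \<in> q" "br W z \<notin> sum_set q (\<sigma> ` q)" ..
  then show "\<exists>Z. (\<forall>i<1. Z i \<in> q) \<and> iter_br br W Z 1 \<notin> sum_set q (\<sigma> ` q)"
    by (intro exI[of _ "\<lambda>_. z"]) simp
qed

lemma no_levi_witness_in_bracket_closed_set:
  assumes "W \<in> S" and "S \<subseteq> sum_set q (\<sigma> ` q)"
    and closed: "\<And>X z. X \<in> S \<Longrightarrow> z \<in> q \<Longrightarrow> br X z \<in> S"
  shows "\<not> levi_witness br \<sigma> q W k"
proof -
  have "iter_br br W Z k \<in> S" if "\<forall>i<k. Z i \<in> q" for Z
    using that by (induction k) (simp_all add: \<open>W \<in> S\<close> closed)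
  then show ?thesis
    using \<open>S \<subseteq> sum_set q (\<sigma> ` q)\<close> unfolding levi_witness_def by blast
qed

lemma levi_order_1_or_infinity:
  assumes "\<not> levi_witness br \<sigma> q W 0"
    and "\<And>k. levi_witness br \<sigma> q W k \<Longrightarrow> levi_witness br \<sigma> q W 1"
  shows "levi_order br \<sigma> q W = 1 \<or> levi_order br \<sigma> q W = \<infinity>"
proof (cases "\<exists>k. levi_witness br \<sigma> q W k")
  case True
  then have "levi_witness br \<sigma> q W 1" using assms(2) by blast
  moreover have "1 \<le> k" if "levi_witness br \<sigma> q W k" for k
    using that assms(1) by (cases k) simp_all
  ultimately have "(LEAST k. levi_witness br \<sigma> q W k) = 1"
    by (rule Least_equality)
  then show ?thesis
    using True unfolding levi_order_def by (simp add: one_enat_def)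
qed (simp add: levi_order_def)

context module
begin

lemma complement_summand_eq_0:
  assumes "subspace P" and "P \<inter> P' = {0}" and "u \<in> P" and "v \<in> P'" and "u + v \<in> P"
  shows "v = 0"
proof -
  have "v = (u + v) - u" by simp
  also have "\<dots> \<in> P" using subspace_diff[OF assms(1,5,3)] .
  finally show ?thesis using assms(2,4) by blast
qed

end

locale complex_lie_algebra = vector_space sc for sc :: "complex \<Rightarrow> 'a::ab_group_add \<Rightarrow> 'a" +
  fixes br :: "'a \<Rightarrow> 'a \<Rightarrow> 'a"
  assumes lie: "lie_algebra sc br"
begin

lemma bracket_add_left: "br (x + y) z = br x z + br y z"
  and bracket_add_right: "br x (y + z) = br x y + br x z"
  and bracket_scale_left: "br (sc c x) y = sc c (br x y)"
  and bracket_self: "br x x = 0"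
  and jacobi: "br x (br y z) + br y (br z x) + br z (br x y) = 0"
  using lie unfolding lie_algebra_def by blast+

lemma additive_bracket_left: "additive (\<lambda>x. br x y)"
  by unfold_locales (rule bracket_add_left)

lemma additive_bracket_right: "additive (br x)"
  by unfold_locales (rule bracket_add_right)

lemma bracket_antisym: "br y x = - br x y"
proof -
  have "0 = br (x + y) (x + y)" by (rule bracket_self[symmetric])
  also have "\<dots> = br x y + br y x"
    unfolding bracket_add_left bracket_add_right by (simp add: bracket_self)
  finally have "br y x + br x y = 0" by (metis add.commute)
  then show ?thesis by (rule eq_neg_iff_add_eq_0[THEN iffD2])
qed

lemma bracket_bracket_left: "br (br x y) z = br x (br y z) - br y (br x z)"
proof -
  have "br z (br x y) = - br (br x y) z" by (rule bracket_antisym)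
  moreover have "br y (br z x) = br y (- br x z)" by (rule arg_cong[OF bracket_antisym])
  ultimately
  show ?thesis using jacobi[of x y z]
    by (simp add: additive.minus[OF additive_bracket_right] algebra_simps)
qed

lemma lie_subalgebra_normalizer_compl:
  assumes q: "lie_subalgebra sc br q" and qc: "subspace qc"
  shows "lie_subalgebra sc br (normalizer_compl br q qc)"
proof -
  have "subspace q" and br_q: "\<And>x y. x \<in> q \<Longrightarrow> y \<in> q \<Longrightarrow> br x y \<in> q"
    using q unfolding lie_subalgebra_def by blast+
  then show ?thesis
    using qc unfolding lie_subalgebra_def subspace_def normalizer_compl_def
    by (auto simp: additive.zero[OF additive_bracket_left] bracket_add_left bracket_scale_left
        bracket_bracket_left subspace_diff[OF qc])
qed

end

locale complex_lie_algebra_with_conjugation = complex_lie_algebra +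
  fixes \<sigma> :: "'a \<Rightarrow> 'a"
  assumes conjugation: "anti_involution sc br \<sigma>"
begin

lemma conj_add: "\<sigma> (x + y) = \<sigma> x + \<sigma> y"
  and conj_scale: "\<sigma> (sc c x) = sc (cnj c) (\<sigma> x)"
  and conj_conj [simp]: "\<sigma> (\<sigma> x) = x"
  and conj_bracket: "\<sigma> (br x y) = br (\<sigma> x) (\<sigma> y)"
  using conjugation unfolding anti_involution_def by blast+

lemma additive_conj: "additive \<sigma>"
  by unfold_locales (rule conj_add)

lemma inj_conj: "inj \<sigma>"
  by (rule inj_on_inverseI[of _ \<sigma>]) simp

lemma subspace_conj_image:
  assumes "subspace S"
  shows "subspace (\<sigma> ` S)"
  unfolding subspace_def
proof (intro conjI ballI allI)
  show "0 \<in> \<sigma> ` S"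
    using additive.zero[OF additive_conj] subspace_0[OF assms] by (metis image_eqI)
next
  fix x y assume "x \<in> \<sigma> ` S" "y \<in> \<sigma> ` S"
  then show "x + y \<in> \<sigma> ` S"
    using subspace_add[OF assms] by (auto simp: conj_add[symmetric])
next
  fix c x assume "x \<in> \<sigma> ` S"
  then obtain u where "u \<in> S" "x = \<sigma> u" by blast
  then have "sc c x = \<sigma> (sc (cnj c) u)" by (simp add: conj_scale)
  then show "sc c x \<in> \<sigma> ` S" using subspace_scale[OF assms \<open>u \<in> S\<close>] by blast
qed

end

locale reductive_cr_algebra = complex_lie_algebra_with_conjugation +
  fixes q qc :: "'a set"
  assumes subalgebra: "lie_subalgebra sc br q"
    and complement: "invariant_complement sc br \<sigma> q qc"
begin

lemma subspace_q: "subspace q"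
  and bracket_q: "x \<in> q \<Longrightarrow> y \<in> q \<Longrightarrow> br x y \<in> q"
  using subalgebra unfolding lie_subalgebra_def by blast+

lemma subspace_qc: "subspace qc"
  and q_inter_qc: "q \<inter> qc = {0}"
  and bracket_q_inter_conj_q_qc: "x \<in> q \<inter> \<sigma> ` q \<Longrightarrow> y \<in> qc \<Longrightarrow> br x y \<in> qc"
  and direct_sum: "direct_sum4 (q \<inter> \<sigma> ` q) (q \<inter> \<sigma> ` qc) (qc \<inter> \<sigma> ` q) (qc \<inter> \<sigma> ` qc)"
  using complement unfolding invariant_complement_def by blast+

lemma subspace_conj_q: "subspace (\<sigma> ` q)"
  by (rule subspace_conj_image[OF subspace_q])

lemma subspace_conj_qc: "subspace (\<sigma> ` qc)"
  by (rule subspace_conj_image[OF subspace_qc])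

lemma conj_q_inter_conj_qc: "\<sigma> ` q \<inter> \<sigma> ` qc = {0}"
proof -
  have "\<sigma> ` q \<inter> \<sigma> ` qc = \<sigma> ` (q \<inter> qc)" by (rule image_Int[OF inj_conj, symmetric])
  then show ?thesis by (simp add: q_inter_qc additive.zero[OF additive_conj])
qed

lemma four_part_decomposition:
  obtains a b c d where "a \<in> q \<inter> \<sigma> ` q" "b \<in> q \<inter> \<sigma> ` qc" "c \<in> qc \<inter> \<sigma> ` q"
    "d \<in> qc \<inter> \<sigma> ` qc" "x = a + b + c + d"
proof -
  obtain t where t: "case t of (a, b, c, d) \<Rightarrow> a \<in> q \<inter> \<sigma> ` q \<and> b \<in> q \<inter> \<sigma> ` qc
      \<and> c \<in> qc \<inter> \<sigma> ` q \<and> d \<in> qc \<inter> \<sigma> ` qc \<and> x = a + b + c + d"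
    using ex1_implies_ex[OF direct_sum[unfolded direct_sum4_def, rule_format]] ..
  obtain a b c d where "t = (a, b, c, d)" by (cases t) auto
  with t have "a \<in> q \<inter> \<sigma> ` q" "b \<in> q \<inter> \<sigma> ` qc" "c \<in> qc \<inter> \<sigma> ` q"
    "d \<in> qc \<inter> \<sigma> ` qc" "x = a + b + c + d"
    by simp_all
  then show ?thesis by (rule that)
qed

lemma q_decomposition:
  assumes "x \<in> q"
  obtains a b where "a \<in> q \<inter> \<sigma> ` q" "b \<in> q \<inter> \<sigma> ` qc" "x = a + b"
proof -
  obtain a b c d where abcd: "a \<in> q \<inter> \<sigma> ` q" "b \<in> q \<inter> \<sigma> ` qc" "c \<in> qc \<inter> \<sigma> ` q"
    "d \<in> qc \<inter> \<sigma> ` qc" "x = a + b + c + d"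
    by (rule four_part_decomposition)
  have "c + d = 0"
  proof (rule complement_summand_eq_0[OF subspace_q q_inter_qc])
    show "a + b \<in> q" and "c + d \<in> qc"
      using abcd subspace_add[OF subspace_q] subspace_add[OF subspace_qc] by auto
    show "a + b + (c + d) \<in> q" using abcd assms by (simp add: add.assoc)
  qed
  with abcd that show ?thesis by (simp add: add.assoc)
qed

lemma conj_q_decomposition:
  assumes "x \<in> \<sigma> ` q"
  obtains a c where "a \<in> q \<inter> \<sigma> ` q" "c \<in> qc \<inter> \<sigma> ` q" "x = a + c"
proof -
  obtain a b c d where abcd: "a \<in> q \<inter> \<sigma> ` q" "b \<in> q \<inter> \<sigma> ` qc" "c \<in> qc \<inter> \<sigma> ` q"
    "d \<in> qc \<inter> \<sigma> ` qc" "x = a + b + c + d"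
    by (rule four_part_decomposition)
  have "b + d = 0"
  proof (rule complement_summand_eq_0[OF subspace_conj_q conj_q_inter_conj_qc])
    show "a + c \<in> \<sigma> ` q" and "b + d \<in> \<sigma> ` qc"
      using abcd subspace_add[OF subspace_conj_q] subspace_add[OF subspace_conj_qc] by auto
    show "a + c + (b + d) \<in> \<sigma> ` q" using abcd assms by (simp add: ac_simps)
  qed
  with abcd that show ?thesis by (simp add: algebra_simps)
qed

lemma conj_qc_inter_sum_subset: "\<sigma> ` qc \<inter> sum_set q (\<sigma> ` q) \<subseteq> q \<inter> \<sigma> ` qc"
proof
  fix x assume x: "x \<in> \<sigma> ` qc \<inter> sum_set q (\<sigma> ` q)"
  then obtain p s where "p \<in> q" "s \<in> \<sigma> ` q" "x = p + s"
    unfolding sum_set_def by blast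
  moreover obtain a b where "a \<in> q \<inter> \<sigma> ` q" "b \<in> q \<inter> \<sigma> ` qc" "p = a + b"
    using q_decomposition[OF \<open>p \<in> q\<close>] .
  moreover obtain a' c where "a' \<in> q \<inter> \<sigma> ` q" "c \<in> qc \<inter> \<sigma> ` q" "s = a' + c"
    using conj_q_decomposition[OF \<open>s \<in> \<sigma> ` q\<close>] .
  ultimately have "x - b = a + a' + c" and "b \<in> q \<inter> \<sigma> ` qc"
    by (simp_all add: algebra_simps)
  moreover have "a + a' + c \<in> \<sigma> ` q"
    using \<open>a \<in> _\<close> \<open>a' \<in> _\<close> \<open>c \<in> _\<close> subspace_add[OF subspace_conj_q] by blast
  moreover have "x - b \<in> \<sigma> ` qc"
    using x \<open>b \<in> q \<inter> \<sigma> ` qc\<close> subspace_diff[OF subspace_conj_qc] by blast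
  ultimately have "x - b \<in> \<sigma> ` q \<inter> \<sigma> ` qc" by simp
  then have "x = b" using conj_q_inter_conj_qc by simp
  with \<open>b \<in> q \<inter> \<sigma> ` qc\<close> show "x \<in> q \<inter> \<sigma> ` qc" by simp
qed

lemma lie_subalgebra_normalizer: "lie_subalgebra sc br (normalizer_compl br q qc)"
  by (rule lie_subalgebra_normalizer_compl[OF subalgebra subspace_qc])

lemma normalizer_subset_q: "normalizer_compl br q qc \<subseteq> q"
  unfolding normalizer_compl_def by blast

lemma q_inter_conj_q_subset_normalizer: "q \<inter> \<sigma> ` q \<subseteq> normalizer_compl br q qc"
  unfolding normalizer_compl_def using bracket_q_inter_conj_q_qc by blast

lemma conj_mem_q_inter_conj_q: "a \<in> q \<inter> \<sigma> ` q \<Longrightarrow> \<sigma> a \<in> q \<inter> \<sigma> ` q"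
  by force

lemma bracket_q_inter_conj_q_q_inter_conj_qc:
  assumes a: "a \<in> q \<inter> \<sigma> ` q" and b: "b \<in> q \<inter> \<sigma> ` qc"
  shows "br a b \<in> q \<inter> \<sigma> ` qc"
proof -
  from b obtain v where v: "v \<in> qc" "b = \<sigma> v" by blast
  have "br (\<sigma> a) v \<in> qc"
    using bracket_q_inter_conj_q_qc[OF conj_mem_q_inter_conj_q[OF a] v(1)] .
  moreover have "br a b = \<sigma> (br (\<sigma> a) v)" by (simp add: v conj_bracket)
  ultimately show ?thesis using a b bracket_q by blast
qed

lemma bracket_conj_normalizer_q_inter_conj_q:
  assumes "Y \<in> \<sigma> ` normalizer_compl br q qc" and "a \<in> q \<inter> \<sigma> ` q"
  shows "br Y a \<in> \<sigma> ` normalizer_compl br q qc"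
proof -
  from assms(1) obtain Z where Z: "Z \<in> normalizer_compl br q qc" "Y = \<sigma> Z" by blast
  have "br Z (\<sigma> a) \<in> normalizer_compl br q qc"
    using lie_subalgebra_normalizer Z(1) q_inter_conj_q_subset_normalizer
      conj_mem_q_inter_conj_q[OF assms(2)] unfolding lie_subalgebra_def by blast
  moreover have "br Y a = \<sigma> (br Z (\<sigma> a))" by (simp add: Z(2) conj_bracket)
  ultimately show ?thesis by blast
qed

lemma bracket_conj_normalizer_conj_qc:
  assumes "Y \<in> \<sigma> ` normalizer_compl br q qc" and "x \<in> \<sigma> ` qc"
  shows "br Y x \<in> \<sigma> ` qc"
proof -
  from assms obtain Z v where "Z \<in> normalizer_compl br q qc" "v \<in> qc" "Y = \<sigma> Z" "x = \<sigma> v"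
    by blast
  then have "br Z v \<in> qc" and "br Y x = \<sigma> (br Z v)"
    unfolding normalizer_compl_def by (simp_all add: conj_bracket)
  then show ?thesis by blast
qed

definition stable_conj_normalizer :: "'a set" where
  "stable_conj_normalizer =
    {Y \<in> \<sigma> ` normalizer_compl br q qc. \<forall>b \<in> q \<inter> \<sigma> ` qc. br Y b \<in> q \<inter> \<sigma> ` qc}"

lemma stable_conj_normalizer_subset_conj_q: "stable_conj_normalizer \<subseteq> \<sigma> ` q"
  unfolding stable_conj_normalizer_def using normalizer_subset_q by blast

lemma bracket_stable_conj_normalizer:
  assumes Y: "Y \<in> stable_conj_normalizer" and a: "a \<in> q \<inter> \<sigma> ` q"
  shows "br Y a \<in> stable_conj_normalizer"
proof -
  have "br (br Y a) b \<in> q \<inter> \<sigma> ` qc" if b: "b \<in> q \<inter> \<sigma> ` qc" for b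
  proof -
    have "br Y (br a b) \<in> q \<inter> \<sigma> ` qc"
      using Y bracket_q_inter_conj_q_q_inter_conj_qc[OF a b]
      unfolding stable_conj_normalizer_def by blast
    moreover have "br a (br Y b) \<in> q \<inter> \<sigma> ` qc"
      using Y b bracket_q_inter_conj_q_q_inter_conj_qc[OF a]
      unfolding stable_conj_normalizer_def by blast
    ultimately show ?thesis
      unfolding bracket_bracket_left
      using subspace_diff[OF subspace_inter[OF subspace_q subspace_conj_qc]] by blast
  qed
  with Y a bracket_conj_normalizer_q_inter_conj_q show ?thesis
    unfolding stable_conj_normalizer_def by blast
qed

lemma bracket_sum_stable_conj_normalizer_q:
  assumes X: "X \<in> sum_set stable_conj_normalizer q" and z: "z \<in> q"
  shows "br X z \<in> sum_set stable_conj_normalizer q"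
proof -
  obtain Y v where Yv: "Y \<in> stable_conj_normalizer" "v \<in> q" "X = Y + v"
    using X unfolding sum_set_def by blast
  obtain a b where ab: "a \<in> q \<inter> \<sigma> ` q" "b \<in> q \<inter> \<sigma> ` qc" "z = a + b"
    using q_decomposition[OF z] .
  have "br X z = br Y a + (br Y b + br v z)"
    by (simp add: Yv(3) ab(3) bracket_add_left bracket_add_right add.assoc)
  moreover have "br Y a \<in> stable_conj_normalizer"
    using bracket_stable_conj_normalizer[OF Yv(1) ab(1)] .
  moreover have "br Y b \<in> q"
    using Yv(1) ab(2) unfolding stable_conj_normalizer_def by blast
  then have "br Y b + br v z \<in> q"
    using subspace_add[OF subspace_q] bracket_q[OF Yv(2) z] by blast
  ultimately show ?thesis unfolding sum_set_def by blast
qed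

lemma sum_stable_conj_normalizer_q_subset:
  "sum_set stable_conj_normalizer q \<subseteq> sum_set q (\<sigma> ` q)"
  using stable_conj_normalizer_subset_conj_q unfolding sum_set_def by (fastforce simp: add.commute)

lemma conj_normalizer_mem_stable:
  assumes Z: "Z \<in> normalizer_compl br q qc" and no1: "\<not> levi_witness br \<sigma> q (\<sigma> Z) 1"
  shows "\<sigma> Z \<in> stable_conj_normalizer"
proof -
  have "br (\<sigma> Z) b \<in> q \<inter> \<sigma> ` qc" if b: "b \<in> q \<inter> \<sigma> ` qc" for b
  proof -
    have "br (\<sigma> Z) b \<in> \<sigma> ` qc"
      using bracket_conj_normalizer_conj_qc Z b by blast
    moreover have "br (\<sigma> Z) b \<in> sum_set q (\<sigma> ` q)"
      using no1 b unfolding levi_witness_1_iff by blast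
    ultimately show ?thesis using conj_qc_inter_sum_subset by blast
  qed
  with Z show ?thesis unfolding stable_conj_normalizer_def by blast
qed

lemma levi_order_conj_normalizer:
  assumes Z: "Z \<in> normalizer_compl br q qc"
  shows "levi_order br \<sigma> q (\<sigma> Z) = 1 \<or> levi_order br \<sigma> q (\<sigma> Z) = \<infinity>"
proof (rule levi_order_1_or_infinity)
  have "\<sigma> Z \<in> \<sigma> ` q" using Z normalizer_subset_q by blast
  then have "\<sigma> Z \<in> sum_set q (\<sigma> ` q)"
    unfolding sum_set_def using subspace_0[OF subspace_q] by force
  then show "\<not> levi_witness br \<sigma> q (\<sigma> Z) 0" by (simp add: levi_witness_0_iff)
next
  fix k assume "levi_witness br \<sigma> q (\<sigma> Z) k"
  moreover have "\<not> levi_witness br \<sigma> q (\<sigma> Z) k" if "\<not> levi_witness br \<sigma> q (\<sigma> Z) 1"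
  proof (rule no_levi_witness_in_bracket_closed_set)
    show "\<sigma> Z \<in> sum_set stable_conj_normalizer q"
      using conj_normalizer_mem_stable[OF Z that] subspace_0[OF subspace_q]
      unfolding sum_set_def by force
  qed (fact sum_stable_conj_normalizer_q_subset, fact bracket_sum_stable_conj_normalizer_q)
  ultimately show "levi_witness br \<sigma> q (\<sigma> Z) 1" by blast
qed

end

theorem mainTheorem5:
  fixes sc :: "complex \<Rightarrow> 'a::ab_group_add \<Rightarrow> 'a"
    and br :: "'a \<Rightarrow> 'a \<Rightarrow> 'a"
    and \<sigma> :: "'a \<Rightarrow> 'a"
    and q qc :: "'a set"
  assumes "fin_dim_complex_space sc"
    and "lie_algebra sc br"
    and "anti_involution sc br \<sigma>"
    and "lie_subalgebra sc br q"
    and "invariant_complement sc br \<sigma> q qc"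
  shows "lie_subalgebra sc br (normalizer_compl br q qc)
    \<and> normalizer_compl br q qc \<subseteq> q
    \<and> q \<inter> \<sigma> ` q \<subseteq> normalizer_compl br q qc
    \<and> (\<forall>Z \<in> normalizer_compl br q qc - \<sigma> ` q.
          levi_order br \<sigma> q (\<sigma> Z) = 1 \<or> levi_order br \<sigma> q (\<sigma> Z) = \<infinity>)"
proof -
  interpret vector_space sc
    using assms(1) unfolding fin_dim_complex_space_def by blast
  interpret reductive_cr_algebra sc br \<sigma> q qc
    by unfold_locales (fact assms)+
  show ?thesis
  proof (intro conjI ballI)
    \<comment> \<open>The dichotomy holds on all of \<open>N\<close>; excluding \<open>\<sigma>(q)\<close> only ensures \<open>\<sigma> Z \<notin> q\<close>,
      as the notion of Levi-order presumes.\<close>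
    fix Z assume "Z \<in> normalizer_compl br q qc - \<sigma> ` q"
    then show "levi_order br \<sigma> q (\<sigma> Z) = 1 \<or> levi_order br \<sigma> q (\<sigma> Z) = \<infinity>"
      by (intro levi_order_conj_normalizer) blast
  qed (fact lie_subalgebra_normalizer normalizer_subset_q q_inter_conj_q_subset_normalizer)+
qed

end
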